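(* (1) If $\beta\in\mathcal Q(\Phi_+)$ is not a simple root, then there exists $i\in I$ such that $r_i(\beta)\in\mathcal Q(\Phi_+)$ and $\mathrm{ht}(r_i(\beta^\vee))=\mathrm{ht}(\beta^\vee)-1$. (2) Let $\beta\in\mathcal Q(\Phi_+)$ and $i\in I$. Then $r_i(\beta)\in\mathcal Q(\Phi_+)$ if and only if $|\langle\beta^\vee,\alpha_i\rangle|\le1$.
   Context: Kac–Moody root datum $(A,X,Y,(\alpha_i)_{i\in I},(\alpha_i^\vee)_{i\in I})$ with generalized Cartan matrix $A=(a_{i,j})$, $\langle\alpha_i^\vee,\alpha_j\rangle=a_{i,j}$, simple reflections $r_i(x)=x-\langle\alpha_i^\vee,x\rangle\alpha_i$ on $X$ and $r_i(y)=y-\langle y,\alpha_i\rangle\alpha_i^\vee$ on $Y$, Weyl group $W^v=\langle r_i\rangle$. $\Phi=W^v\{\alpha_i\}$, $\Phi_+=\Phi\cap\bigoplus\mathbb Z_{\ge0}\alpha_i$, $\Phi_-=-\Phi_+$; coroot $\beta^\vee=w(\alpha_i^\vee)$ and reflection $s_\beta=wr_iw^{-1}$ for $\beta=w(\alpha_i)$; $\mathrm{ht}(\sum N_i\alpha_i^\vee)=\sum N_i$. $\mathrm{Inv}(w)=\{\alpha\in\Phi_+\mid w\alpha\in\Phi_-\}$. $\beta\in\Phi_+$ is quantum if $\langle\beta^\vee,\gamma\rangle=1$ for all $\gamma\in\mathrm{Inv}(s_\beta)\setminus\{\beta\}$; $\mathcal Q(\Phi_+)$ is the set of quantum roots. 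*)

theory Defs
  imports Main
begin

text \<open>Kac-Moody root data, realised on the root lattice Q = (I -> int) (coordinates
  w.r.t. the simple roots) and the coroot lattice Q^vee = (I -> int) (coordinates
  w.r.t. the simple coroots).\<close>

definition gcm :: "('i::finite \<Rightarrow> 'i \<Rightarrow> int) \<Rightarrow> bool" where
  "gcm A \<longleftrightarrow> (\<forall>i. A i i = 2) \<and> (\<forall>i j. i \<noteq> j \<longrightarrow> A i j \<le> 0)
            \<and> (\<forall>i j. A i j = 0 \<longleftrightarrow> A j i = 0)"

text \<open>simple root alpha_i (resp. simple coroot alpha_i^vee) as a coordinate vector\<close>
definition simple :: "'i \<Rightarrow> ('i \<Rightarrow> int)" where
  "simple i = (\<lambda>j. if j = i then 1 else 0)"

text \<open>pairing <y, x> with y in the coroot lattice and x in the root lattice,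
  bilinear with <alpha_i^vee, alpha_j> = A i j\<close>
definition pair :: "('i::finite \<Rightarrow> 'i \<Rightarrow> int) \<Rightarrow> ('i \<Rightarrow> int) \<Rightarrow> ('i \<Rightarrow> int) \<Rightarrow> int" where
  "pair A y x = (\<Sum>i\<in>UNIV. \<Sum>j\<in>UNIV. y i * x j * A i j)"

definition refl :: "('i::finite \<Rightarrow> 'i \<Rightarrow> int) \<Rightarrow> 'i \<Rightarrow> ('i \<Rightarrow> int) \<Rightarrow> ('i \<Rightarrow> int)" where
  "refl A i x = x - (\<lambda>j. pair A (simple i) x * simple i j)"

definition crefl :: "('i::finite \<Rightarrow> 'i \<Rightarrow> int) \<Rightarrow> 'i \<Rightarrow> ('i \<Rightarrow> int) \<Rightarrow> ('i \<Rightarrow> int)" where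
  "crefl A i y = y - (\<lambda>j. pair A y (simple i) * simple j i)"

text \<open>An element of W^v given by a word [i1,...,ik] means r_i1 ... r_ik.\<close>
definition wact :: "('i::finite \<Rightarrow> 'i \<Rightarrow> int) \<Rightarrow> 'i list \<Rightarrow> ('i \<Rightarrow> int) \<Rightarrow> ('i \<Rightarrow> int)" where
  "wact A ws = foldr (\<lambda>i f. refl A i \<circ> f) ws id"

definition cwact :: "('i::finite \<Rightarrow> 'i \<Rightarrow> int) \<Rightarrow> 'i list \<Rightarrow> ('i \<Rightarrow> int) \<Rightarrow> ('i \<Rightarrow> int)" where
  "cwact A ws = foldr (\<lambda>i f. crefl A i \<circ> f) ws id"

definition roots :: "('i::finite \<Rightarrow> 'i \<Rightarrow> int) \<Rightarrow> ('i \<Rightarrow> int) set" where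
  "roots A = {wact A ws (simple i) | ws i. True}"

definition pos_roots :: "('i::finite \<Rightarrow> 'i \<Rightarrow> int) \<Rightarrow> ('i \<Rightarrow> int) set" where
  "pos_roots A = {x \<in> roots A. \<forall>j. 0 \<le> x j}"

definition neg_roots :: "('i::finite \<Rightarrow> 'i \<Rightarrow> int) \<Rightarrow> ('i \<Rightarrow> int) set" where
  "neg_roots A = uminus ` pos_roots A"

definition coroot :: "('i::finite \<Rightarrow> 'i \<Rightarrow> int) \<Rightarrow> ('i \<Rightarrow> int) \<Rightarrow> ('i \<Rightarrow> int)" where
  "coroot A \<beta> = (THE c. \<exists>ws i. \<beta> = wact A ws (simple i) \<and> c = cwact A ws (simple i))"

text \<open>s_beta = w r_i w^{-1} (acting on the root lattice) for beta = w(alpha_i);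
  w^{-1} is given by the reversed word since r_i is an involution\<close>
definition srefl :: "('i::finite \<Rightarrow> 'i \<Rightarrow> int) \<Rightarrow> ('i \<Rightarrow> int) \<Rightarrow> ('i \<Rightarrow> int) \<Rightarrow> ('i \<Rightarrow> int)" where
  "srefl A \<beta> = (THE f. \<exists>ws i. \<beta> = wact A ws (simple i)
                      \<and> f = wact A ws \<circ> refl A i \<circ> wact A (rev ws))"

definition Inv :: "('i::finite \<Rightarrow> 'i \<Rightarrow> int) \<Rightarrow> (('i \<Rightarrow> int) \<Rightarrow> ('i \<Rightarrow> int)) \<Rightarrow> ('i \<Rightarrow> int) set" where
  "Inv A w = {\<alpha> \<in> pos_roots A. w \<alpha> \<in> neg_roots A}"

definition quantum_roots :: "('i::finite \<Rightarrow> 'i \<Rightarrow> int) \<Rightarrow> ('i \<Rightarrow> int) set" where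
  "quantum_roots A = {\<beta> \<in> pos_roots A.
       \<forall>\<gamma> \<in> Inv A (srefl A \<beta>) - {\<beta>}. pair A (coroot A \<beta>) \<gamma> = 1}"

definition ht :: "('i::finite \<Rightarrow> int) \<Rightarrow> int" where
  "ht y = (\<Sum>i\<in>UNIV. y i)"

end

theory Submission
  imports Defs
begin

text \<open>The backbone is Tits' positivity theorem: every root has all its coordinates of one sign.
  It follows from the classical length argument. From a reduced word one splits off a factor
  in a rank-two parabolic subgroup, on whose two simple roots the action is explicit: for
  \<open>a b \<ge> 4\<close> (with \<open>a = -a\<^sub>s\<^sub>s\<^sub>', b = -a\<^sub>s\<^sub>'\<^sub>s\<close>) the coefficients stay nonnegative along
  alternating words, and for \<open>a b < 4\<close> the braid relation bounds the length of reduced words.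
  Positivity makes the action faithful, so \<open>\<beta>\<^sup>\<or>\<close> and \<open>s\<^sub>\<beta>\<close> are well defined and
  \<open>s\<^sub>\<beta> x = x - \<langle>\<beta>\<^sup>\<or>, x\<rangle> \<beta>\<close>.

  For a quantum root \<open>\<beta> \<noteq> \<alpha>\<^sub>i\<close>, a pairing \<open>\<langle>\<beta>\<^sup>\<or>, \<alpha>\<^sub>i\<rangle> \<ge> 1\<close> makes \<open>s\<^sub>\<beta> \<alpha>\<^sub>i\<close> negative, so
  \<open>\<alpha>\<^sub>i \<in> Inv(s\<^sub>\<beta>)\<close> and the pairing is exactly 1. Since \<open>s\<^bsub>r\<^sub>i \<beta>\<^esub> = r\<^sub>i s\<^sub>\<beta> r\<^sub>i\<close> and \<open>r\<^sub>i\<close>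
  permutes \<open>\<Phi>\<^sub>+ - {\<alpha>\<^sub>i}\<close>, the inversions of the two reflections correspond, which gives (2).
  For (1), \<open>\<langle>\<beta>\<^sup>\<or>, \<beta>\<rangle> = 2\<close> with \<open>\<beta> \<ge> 0\<close> yields some \<open>i\<close> with \<open>\<langle>\<beta>\<^sup>\<or>, \<alpha>\<^sub>i\<rangle> \<ge> 1\<close>, hence
  \<open>= 1\<close>, and \<open>r\<^sub>i\<close> lowers the height of \<open>\<beta>\<^sup>\<or>\<close> by exactly this pairing.\<close>

definition cm_transpose :: "('i \<Rightarrow> 'i \<Rightarrow> int) \<Rightarrow> ('i \<Rightarrow> 'i \<Rightarrow> int)" where
  "cm_transpose B = (\<lambda>i j. B j i)"

lemma cm_transpose_cm_transpose [simp]: "cm_transpose (cm_transpose B) = B"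
  by (simp add: cm_transpose_def)

lemma gcm_diag: "gcm B \<Longrightarrow> B i i = 2"
  by (simp add: gcm_def)

lemma gcm_transpose: "gcm B \<Longrightarrow> gcm (cm_transpose B)"
  by (auto simp: gcm_def cm_transpose_def)

lemma pair_eq_sum_left: "pair B y x = (\<Sum>a\<in>UNIV. y a * (\<Sum>b\<in>UNIV. x b * B a b))"
  unfolding pair_def by (simp add: sum_distrib_left mult_ac)

lemma pair_eq_sum_right: "pair B y x = (\<Sum>b\<in>UNIV. x b * (\<Sum>a\<in>UNIV. y a * B a b))"
  unfolding pair_def by (subst sum.swap) (simp add: sum_distrib_left mult_ac)

lemma simple_mult: "simple i a * t = (if a = i then t else 0)"
  by (simp add: simple_def)

lemma pair_simple_left: "pair B (simple i) x = (\<Sum>j\<in>UNIV. x j * B i j)"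
  by (simp add: pair_eq_sum_left simple_mult)

lemma pair_simple_right: "pair B y (simple i) = (\<Sum>a\<in>UNIV. y a * B a i)"
  by (simp add: pair_eq_sum_right simple_mult)

lemma pair_simple_simple: "pair B (simple i) (simple j) = B i j"
  by (simp add: pair_simple_left simple_mult)

lemma pair_expand_right: "pair B y x = (\<Sum>j\<in>UNIV. x j * pair B y (simple j))"
  unfolding pair_simple_right by (rule pair_eq_sum_right)

lemma pair_transpose: "pair (cm_transpose B) x y = pair B y x"
  unfolding pair_def cm_transpose_def by (subst sum.swap) (simp add: mult_ac)

lemma pair_linear_right: "pair B y (\<lambda>a. p * x a + q * z a) = p * pair B y x + q * pair B y z"
  unfolding pair_eq_sum_right by (simp add: algebra_simps sum.distrib sum_distrib_left)

lemma pair_uminus_right: "pair B y (\<lambda>j. - x j) = - pair B y x"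
  using pair_linear_right[of B y "-1" x 0 x] by simp

lemma pair_diff_left: "pair B (\<lambda>a. y a - q * z a) x = pair B y x - q * pair B z x"
  unfolding pair_eq_sum_left by (simp add: algebra_simps sum_subtractf sum_distrib_left)

lemma pair_diff_right: "pair B y (\<lambda>a. x a - q * z a) = pair B y x - q * pair B y z"
  unfolding pair_eq_sum_right by (simp add: algebra_simps sum_subtractf sum_distrib_left)

lemma refl_apply: "refl B i x = (\<lambda>j. x j - pair B (simple i) x * simple i j)"
  by (simp add: refl_def fun_diff_def)

lemma refl_simple: "refl B i (simple j) = (\<lambda>l. simple j l - B i j * simple i l)"
  by (simp add: refl_apply pair_simple_simple)

lemma refl_simple_self: "B i i = 2 \<Longrightarrow> refl B i (simple i) = (\<lambda>j. - simple i j)"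
  by (simp add: refl_simple)

lemma refl_other: "j \<noteq> i \<Longrightarrow> refl B i x j = x j"
  by (simp add: refl_apply simple_def)

lemma refl_linear: "refl B i (\<lambda>j. p * x j + q * y j) = (\<lambda>j. p * refl B i x j + q * refl B i y j)"
  by (rule ext) (simp add: refl_apply pair_linear_right algebra_simps)

lemma refl_refl:
  assumes "B i i = 2"
  shows "refl B i (refl B i x) = x"
proof -
  have "pair B (simple i) (refl B i x) = - pair B (simple i) x"
    unfolding refl_apply using assms by (simp add: pair_diff_right pair_simple_simple)
  then show ?thesis by (simp add: refl_apply[of B i "refl B i x"]) (simp add: refl_apply)
qed

lemma crefl_eq_refl_transpose: "crefl A i = refl (cm_transpose A) i"
proof
  fix y
  have "simple j i = simple i j" for j :: 'a by (simp add: simple_def eq_commute)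
  then show "crefl A i y = refl (cm_transpose A) i y"
    by (simp add: crefl_def refl_def fun_diff_def pair_transpose)
qed

lemma pair_refl_transpose_refl:
  "pair B (refl (cm_transpose B) i y) (refl B i x)
     = pair B y x + pair B y (simple i) * pair B (simple i) x * (B i i - 2)"
proof -
  have "refl (cm_transpose B) i y = (\<lambda>j. y j - pair B y (simple i) * simple i j)"
    by (simp add: refl_apply pair_transpose)
  then show ?thesis
    unfolding refl_apply[of B i x]
    by (simp only: pair_diff_left pair_diff_right pair_simple_simple) (simp add: algebra_simps)
qed

lemma pair_crefl:
  assumes "A i i = 2"
  shows "pair A (crefl A i y) x = pair A y (refl A i x)"
  using pair_refl_transpose_refl[of A i y "refl A i x"] refl_refl[of A i x] assms
  by (simp add: crefl_eq_refl_transpose)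

lemma ht_crefl: "ht (crefl A i y) = ht y - pair A y (simple i)"
proof -
  have "ht (crefl A i y) = ht y - pair A y (simple i) * (\<Sum>j\<in>UNIV. simple j i)"
    by (simp add: ht_def crefl_def fun_diff_def sum_subtractf sum_distrib_left)
  also have "(\<Sum>j\<in>UNIV. simple j i) = (1::int)"
    by (simp add: simple_def)
  finally show ?thesis by simp
qed

lemma wact_Nil [simp]: "wact B [] = id"
  by (simp add: wact_def)

lemma wact_Cons [simp]: "wact B (i # ws) = refl B i \<circ> wact B ws"
  by (simp add: wact_def)

lemma wact_append: "wact B (xs @ ys) = wact B xs \<circ> wact B ys"
  by (induction xs) auto

lemma cwact_eq_wact_transpose: "cwact A ws = wact (cm_transpose A) ws"
  by (simp add: cwact_def wact_def crefl_eq_refl_transpose)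

lemma wact_linear:
  "wact B w (\<lambda>j. p * x j + q * y j) = (\<lambda>j. p * wact B w x j + q * wact B w y j)"
  by (induction w) (simp_all add: refl_linear)

lemma wact_uminus: "wact B w (\<lambda>j. - x j) = (\<lambda>j. - wact B w x j)"
  using wact_linear[of B w "-1" x 0 x] by simp

lemma wact_scale: "wact B w (\<lambda>j. p * x j) = (\<lambda>j. p * wact B w x j)"
  using wact_linear[of B w p x 0 x] by simp

lemma wact_rev_wact: "\<forall>i. B i i = 2 \<Longrightarrow> wact B (rev w) (wact B w x) = x"
  by (induction w arbitrary: x) (auto simp: wact_append refl_refl)

lemma wact_wact_rev: "\<forall>i. B i i = 2 \<Longrightarrow> wact B w (wact B (rev w) x) = x"
  using wact_rev_wact[of B "rev w" x] by simp

lemma pair_wact_transpose_wact: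
  assumes "\<forall>i. B i i = 2"
  shows "pair B (wact (cm_transpose B) w y) (wact B w x) = pair B y x"
  using assms pair_refl_transpose_refl
  by (induction w arbitrary: x y) (simp_all add: pair_refl_transpose_refl)

text \<open>Words are compared by their action on both lattices, so equivalent words represent the
  same element of \<open>W\<^sup>v\<close> without knowing yet that the action on roots is faithful.\<close>

definition word_equiv :: "('i::finite \<Rightarrow> 'i \<Rightarrow> int) \<Rightarrow> 'i list \<Rightarrow> 'i list \<Rightarrow> bool" where
  "word_equiv B u v \<longleftrightarrow> wact B u = wact B v \<and> wact (cm_transpose B) u = wact (cm_transpose B) v"

definition word_length :: "('i::finite \<Rightarrow> 'i \<Rightarrow> int) \<Rightarrow> 'i list \<Rightarrow> nat" where
  "word_length B w = (LEAST n. \<exists>u. length u = n \<and> word_equiv B u w)"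

definition word_length_in :: "('i::finite \<Rightarrow> 'i \<Rightarrow> int) \<Rightarrow> 'i set \<Rightarrow> 'i list \<Rightarrow> nat" where
  "word_length_in B S w = (LEAST n. \<exists>u. set u \<subseteq> S \<and> length u = n \<and> word_equiv B u w)"

lemma word_equiv_refl [simp]: "word_equiv B u u"
  by (simp add: word_equiv_def)

lemma word_equiv_sym: "word_equiv B u v \<Longrightarrow> word_equiv B v u"
  by (simp add: word_equiv_def)

lemma word_equiv_trans: "word_equiv B u v \<Longrightarrow> word_equiv B v w \<Longrightarrow> word_equiv B u w"
  by (simp add: word_equiv_def)

lemma word_equiv_append:
  "word_equiv B u u' \<Longrightarrow> word_equiv B v v' \<Longrightarrow> word_equiv B (u @ v) (u' @ v')"
  by (simp add: word_equiv_def wact_append)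

lemma word_equiv_cancel:
  assumes "gcm B"
  shows "word_equiv B (x @ [c, c] @ y) (x @ y)"
proof -
  have "word_equiv B [c, c] []"
    using assms by (auto simp: gcm_def word_equiv_def refl_refl cm_transpose_def fun_eq_iff)
  then have "word_equiv B ([c, c] @ y) y"
    using word_equiv_append[OF _ word_equiv_refl] by fastforce
  then show ?thesis
    using word_equiv_append[OF word_equiv_refl] by fastforce
qed

lemma word_equiv_snoc_cancel:
  assumes "gcm B" "word_equiv B (r @ [s]) w"
  shows "word_equiv B r (w @ [s])"
proof -
  have "word_equiv B (w @ [s]) (r @ [s, s] @ [])"
    using word_equiv_append[OF word_equiv_sym[OF assms(2)] word_equiv_refl, of "[s]"] by simp
  then have "word_equiv B (w @ [s]) (r @ [])"
    using word_equiv_trans word_equiv_cancel[OF assms(1)] by blast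
  then show ?thesis by (simp add: word_equiv_sym)
qed

lemma word_length_le: "word_length B w \<le> length w"
  unfolding word_length_def by (rule Least_le) auto

lemma word_length_witness: "\<exists>u. length u = word_length B w \<and> word_equiv B u w"
  unfolding word_length_def by (rule LeastI_ex) (auto intro: word_equiv_refl)

lemma word_length_minimal: "word_equiv B u w \<Longrightarrow> word_length B w \<le> length u"
  unfolding word_length_def by (rule Least_le) auto

lemma word_length_equiv:
  assumes "word_equiv B u w"
  shows "word_length B u = word_length B w"
proof -
  obtain a where a: "length a = word_length B u" "word_equiv B a u"
    using word_length_witness by blast
  obtain b where b: "length b = word_length B w" "word_equiv B b w"
    using word_length_witness by blast
  have "word_length B w \<le> word_length B u"
    using word_length_minimal[of B a w] a assms word_equiv_trans by metis
  moreover have "word_length B u \<le> word_length B w"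
    using word_length_minimal[of B b u] b assms word_equiv_trans word_equiv_sym by metis
  ultimately show ?thesis by simp
qed

lemma word_length_append: "word_length B (u @ v) \<le> word_length B u + word_length B v"
proof -
  obtain a where a: "length a = word_length B u" "word_equiv B a u"
    using word_length_witness by blast
  obtain b where b: "length b = word_length B v" "word_equiv B b v"
    using word_length_witness by blast
  have "word_equiv B (a @ b) (u @ v)" using a b word_equiv_append by blast
  then show ?thesis using word_length_minimal[of B "a @ b" "u @ v"] a b by simp
qed

lemma word_length_in_le: "set w \<subseteq> S \<Longrightarrow> word_length_in B S w \<le> length w"
  unfolding word_length_in_def by (rule Least_le) auto

lemma word_length_in_witness:
  "set w \<subseteq> S \<Longrightarrow> \<exists>u. set u \<subseteq> S \<and> length u = word_length_in B S w \<and> word_equiv B u w"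
  unfolding word_length_in_def by (rule LeastI_ex) auto

lemma word_length_in_minimal:
  "set u \<subseteq> S \<Longrightarrow> word_equiv B u w \<Longrightarrow> word_length_in B S w \<le> length u"
  unfolding word_length_in_def by (rule Least_le) auto

lemma word_length_le_word_length_in:
  assumes "set w \<subseteq> S"
  shows "word_length B w \<le> word_length_in B S w"
proof -
  obtain a where "length a = word_length_in B S w" "word_equiv B a w"
    using word_length_in_witness[OF assms] by blast
  then show ?thesis using word_length_minimal[of B a w] by simp
qed

lemma word_length_in_Cons:
  assumes "set w \<subseteq> S" "c \<in> S"
  shows "word_length_in B S (c # w) \<le> word_length_in B S w + 1"
proof -
  obtain u where u: "set u \<subseteq> S" "length u = word_length_in B S w" "word_equiv B u w"
    using word_length_in_witness[OF assms(1)] by blast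
  have "word_equiv B (c # u) (c # w)"
    using word_equiv_append[OF word_equiv_refl[of B "[c]"] u(3)] by simp
  then have "word_length_in B S (c # w) \<le> length (c # u)"
    using word_length_in_minimal[of "c # u" S B "c # w"] u(1) assms(2) by simp
  then show ?thesis using u(2) by simp
qed

section \<open>Rank two\<close>

fun dihedral_coeffs :: "int \<Rightarrow> int \<Rightarrow> nat \<Rightarrow> int \<times> int" where
  "dihedral_coeffs a b 0 = (1, 0)"
| "dihedral_coeffs a b (Suc k) =
     (let (p, q) = dihedral_coeffs a b k in if even k then (p, b * p - q) else (a * q - p, q))"

definition finite_dihedral :: "(int \<times> int) set" where
  "finite_dihedral = {(0, 0), (1, 1), (1, 2), (2, 1), (1, 3), (3, 1)}"

definition braid_order :: "int \<Rightarrow> nat" where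
  "braid_order t = (if t = 0 then 2 else if t = 1 then 3 else if t = 2 then 4 else 6)"

lemma dihedral_coeffs_nonneg_infinite:
  assumes "a \<ge> 0" "b \<ge> 0" "a * b \<ge> 4"
  shows "0 \<le> fst (dihedral_coeffs a b k) \<and> 0 \<le> snd (dihedral_coeffs a b k) \<and>
         (if even k then 2 * snd (dihedral_coeffs a b k) \<le> b * fst (dihedral_coeffs a b k)
          else 2 * fst (dihedral_coeffs a b k) \<le> a * snd (dihedral_coeffs a b k))"
proof (induction k)
  case 0
  then show ?case using assms by simp
next
  case (Suc k)
  obtain p q where pq: "dihedral_coeffs a b k = (p, q)"
    by (cases "dihedral_coeffs a b k")
  show ?case
  proof (cases "even k")
    case True
    with Suc pq have h: "0 \<le> p" "0 \<le> q" "2 * q \<le> b * p" by auto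
    have "a * (2 * q) \<le> a * (b * p)" using h(3) assms(1) by (rule mult_left_mono)
    moreover have "4 * p \<le> (a * b) * p" using assms(3) h(1) by (rule mult_right_mono)
    ultimately have "2 * p \<le> a * (b * p - q)" using h by (simp add: algebra_simps)
    then show ?thesis using True pq h by auto
  next
    case False
    with Suc pq have h: "0 \<le> p" "0 \<le> q" "2 * p \<le> a * q" by auto
    have "b * (2 * p) \<le> b * (a * q)" using h(3) assms(2) by (rule mult_left_mono)
    moreover have "4 * q \<le> (a * b) * q" using assms(3) h(2) by (rule mult_right_mono)
    ultimately have "2 * q \<le> b * (a * q - p)" using h by (simp add: algebra_simps)
    then show ?thesis using False pq h by auto
  qed
qed

lemma dihedral_coeffs_nonneg_finite:
  assumes "(a, b) \<in> finite_dihedral" "L < braid_order (a * b)"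
  shows "0 \<le> fst (dihedral_coeffs a b L) \<and> 0 \<le> snd (dihedral_coeffs a b L)"
proof -
  have "L \<in> {0, 1, 2, 3, 4, 5}" using assms by (auto simp: finite_dihedral_def braid_order_def)
  then show ?thesis using assms by (auto simp: finite_dihedral_def braid_order_def eval_nat_numeral)
qed

lemma gcm_rank2_finite_cases:
  assumes "gcm B" "s \<noteq> s'" "\<not> 4 \<le> B s s' * B s' s"
  shows "(- B s s', - B s' s) \<in> finite_dihedral"
proof -
  define a b where "a = - B s s'" and "b = - B s' s"
  have a: "0 \<le> a" and b: "0 \<le> b" and ab: "a = 0 \<longleftrightarrow> b = 0" and "a * b < 4"
    using assms by (auto simp: gcm_def a_def b_def)
  have "a \<le> 3 \<and> b \<le> 3"
  proof (cases "a = 0")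
    case False
    then have "1 \<le> a" "1 \<le> b" using a b ab by auto
    then have "a \<le> a * b" "b \<le> a * b"
      by (simp_all add: mult_le_cancel_left1 mult_le_cancel_right1)
    then show ?thesis using \<open>a * b < 4\<close> by simp
  qed (use ab in simp)
  then have "a \<in> {0, 1, 2, 3}" "b \<in> {0, 1, 2, 3}" using a b by auto
  then show ?thesis
    using ab \<open>a * b < 4\<close> unfolding finite_dihedral_def a_def [symmetric] b_def [symmetric] by auto
qed

fun alt_word :: "'i \<Rightarrow> 'i \<Rightarrow> nat \<Rightarrow> 'i list" where
  "alt_word s s' 0 = []"
| "alt_word s s' (Suc k) = (if even k then s' else s) # alt_word s s' k"

lemma alt_word_set: "set (alt_word s s' k) \<subseteq> {s, s'}"
  by (induction k) auto

lemma alt_word_length [simp]: "length (alt_word s s' k) = k"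
  by (induction k) auto

lemma alt_word_Suc: "alt_word s s' (Suc k) = alt_word s' s k @ [s']"
  by (induction k) auto

lemma alt_word_prefix: "\<exists>P. alt_word s s' (j + k) = P @ alt_word s s' k \<and> set P \<subseteq> {s, s'}"
proof (induction j)
  case 0
  then show ?case by simp
next
  case (Suc j)
  then obtain P where "alt_word s s' (j + k) = P @ alt_word s s' k" "set P \<subseteq> {s, s'}"
    by blast
  then show ?case by (intro exI[of _ "(if even (j + k) then s' else s) # P"]) auto
qed

lemma not_successively_neq: "\<not> successively (\<noteq>) u \<Longrightarrow> \<exists>x c y. u = x @ [c, c] @ y"
proof (induction u)
  case (Cons x u)
  show ?case
  proof (cases "successively (\<noteq>) u")
    case True
    with Cons.prems obtain u' where "u = x # u'" by (cases u) auto
    then show ?thesis by (intro exI[of _ "[]"]) auto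
  next
    case False
    with Cons.IH obtain a c b where "u = a @ [c, c] @ b" by blast
    then show ?thesis by (intro exI[of _ "x # a"]) auto
  qed
qed simp

lemma successively_neq_eq_alt_word:
  assumes "s \<noteq> s'" "set m \<subseteq> {s, s'}" "successively (\<noteq>) m" "m = [] \<or> last m \<noteq> s"
  shows "m = alt_word s s' (length m)"
  using assms(2-)
proof (induction m)
  case Nil
  then show ?case by simp
next
  case (Cons c m)
  show ?case
  proof (cases m)
    case Nil
    then show ?thesis using Cons.prems assms(1) by auto
  next
    case (Cons d m')
    have "m = alt_word s s' (length m)"
      using Cons.IH Cons.prems \<open>m = d # m'\<close> by auto
    moreover have "c \<noteq> d" using Cons.prems(2) \<open>m = d # m'\<close> by simp
    ultimately show ?thesis using Cons.prems(1) assms(1) \<open>m = d # m'\<close>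
      by (cases "length m'") (auto split: if_splits)
  qed
qed

lemma wact_alt_word_simple:
  assumes "s \<noteq> s'" "B s s = 2" "B s' s' = 2"
  defines "a \<equiv> - B s s'" and "b \<equiv> - B s' s"
  shows "wact B (alt_word s s' k) (simple s)
           = (\<lambda>j. fst (dihedral_coeffs a b k) * simple s j + snd (dihedral_coeffs a b k) * simple s' j)"
proof (induction k)
  case 0
  then show ?case by (auto simp: fun_eq_iff simple_def)
next
  case (Suc k)
  define t where "t = (if even k then s' else s)"
  obtain p q where pq: "dihedral_coeffs a b k = (p, q)"
    by (cases "dihedral_coeffs a b k")
  have "wact B (alt_word s s' (Suc k)) (simple s) = refl B t (\<lambda>j. p * simple s j + q * simple s' j)"
    using Suc pq by (simp add: t_def)
  also have "\<dots> = (\<lambda>j. p * refl B t (simple s) j + q * refl B t (simple s') j)"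
    by (rule refl_linear)
  also have "\<dots> = (\<lambda>j. p * (simple s j - B t s * simple t j) + q * (simple s' j - B t s' * simple t j))"
    by (simp only: refl_simple)
  also have "\<dots> = (\<lambda>j. fst (dihedral_coeffs a b (Suc k)) * simple s j
                     + snd (dihedral_coeffs a b (Suc k)) * simple s' j)"
    using pq assms by (auto simp: t_def fun_eq_iff simple_def algebra_simps)
  finally show ?case .
qed

text \<open>Coordinates of \<open>w x - x\<close> along \<open>\<alpha>\<^sub>s, \<alpha>\<^sub>s'\<close> for a word \<open>w\<close> over \<open>{s, s'}\<close>.\<close>

fun rank2_coeffs :: "('i::finite \<Rightarrow> 'i \<Rightarrow> int) \<Rightarrow> 'i \<Rightarrow> 'i \<Rightarrow> ('i \<Rightarrow> int) \<Rightarrow> 'i list \<Rightarrow> int \<times> int" where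
  "rank2_coeffs B s s' x [] = (0, 0)"
| "rank2_coeffs B s s' x (c # w) = (let (\<alpha>, \<beta>) = rank2_coeffs B s s' x w;
      p = pair B (simple c) x + \<alpha> * B c s + \<beta> * B c s' in
      if c = s then (\<alpha> - p, \<beta>) else (\<alpha>, \<beta> - p))"

lemma wact_rank2:
  assumes "s \<noteq> s'" "set w \<subseteq> {s, s'}"
  shows "wact B w x = (\<lambda>j. x j + fst (rank2_coeffs B s s' x w) * simple s j
                              + snd (rank2_coeffs B s s' x w) * simple s' j)"
  using assms(2)
proof (induction w)
  case Nil
  then show ?case by (simp add: fun_eq_iff)
next
  case (Cons c w)
  obtain \<alpha> \<beta> where ab: "rank2_coeffs B s s' x w = (\<alpha>, \<beta>)"
    by (cases "rank2_coeffs B s s' x w")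
  have "pair B (simple c) (\<lambda>j. x j + \<alpha> * simple s j + \<beta> * simple s' j)
          = pair B (simple c) x + \<alpha> * (\<Sum>j\<in>UNIV. simple s j * B c j)
            + \<beta> * (\<Sum>j\<in>UNIV. simple s' j * B c j)"
    by (simp add: pair_simple_left algebra_simps sum.distrib sum_distrib_left)
  also have "\<dots> = pair B (simple c) x + \<alpha> * B c s + \<beta> * B c s'"
    by (simp add: simple_mult)
  finally have pc: "pair B (simple c) (\<lambda>j. x j + \<alpha> * simple s j + \<beta> * simple s' j)
                      = pair B (simple c) x + \<alpha> * B c s + \<beta> * B c s'" .
  have "wact B w x = (\<lambda>j. x j + \<alpha> * simple s j + \<beta> * simple s' j)"
    using Cons ab by simp
  then have "wact B (c # w) x = (\<lambda>j. x j + \<alpha> * simple s j + \<beta> * simple s' j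
                  - (pair B (simple c) x + \<alpha> * B c s + \<beta> * B c s') * simple c j)"
    by (simp add: refl_apply pc)
  then show ?case
    using Cons.prems assms(1) by (auto simp: ab fun_eq_iff algebra_simps)
qed

lemma alt_word_braid_order:
  "alt_word s s' (braid_order t) =
     (if t = 0 then [s, s'] else if t = 1 then [s', s, s']
      else if t = 2 then [s, s', s, s'] else [s, s', s, s', s, s'])"
proof -
  have alt_word_numeral: "alt_word s s' (numeral n)
          = (if even (pred_numeral n) then s' else s) # alt_word s s' (pred_numeral n)" for n s s'
    by (subst numeral_eq_Suc) (rule alt_word.simps(2))
  show ?thesis by (simp add: braid_order_def alt_word_numeral)
qed

lemma wact_braid:
  assumes "s \<noteq> s'" "B s s = 2" "B s' s' = 2" "B s s' = - a" "B s' s = - b"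
    and "(a, b) \<in> finite_dihedral"
  shows "wact B (alt_word s s' (braid_order (a * b))) = wact B (alt_word s' s (braid_order (a * b)))"
proof
  fix x
  have "rank2_coeffs B s s' x (alt_word s s' (braid_order (a * b)))
          = rank2_coeffs B s s' x (alt_word s' s (braid_order (a * b)))"
    using assms(6) unfolding finite_dihedral_def
  proof (elim insertE emptyE)
  qed (use assms(1-5) in \<open>simp_all add: alt_word_braid_order Let_def algebra_simps\<close>)
  moreover have "set (alt_word s' s (braid_order (a * b))) \<subseteq> {s, s'}"
    using alt_word_set[of s' s] by blast
  ultimately show "wact B (alt_word s s' (braid_order (a * b))) x
                     = wact B (alt_word s' s (braid_order (a * b))) x"
    using wact_rank2[OF assms(1) alt_word_set] wact_rank2[OF assms(1)] by metis
qed

lemma word_equiv_braid: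
  assumes "gcm B" "s \<noteq> s'" "B s s' = - a" "B s' s = - b"
    and "(a, b) \<in> finite_dihedral"
  shows "word_equiv B (alt_word s s' (braid_order (a * b))) (alt_word s' s (braid_order (a * b)))"
proof -
  have "wact B (alt_word s s' (braid_order (a * b))) = wact B (alt_word s' s (braid_order (a * b)))"
    using wact_braid[OF assms(2) _ _ assms(3-5)] gcm_diag[OF assms(1)] by blast
  moreover have "wact (cm_transpose B) (alt_word s s' (braid_order (b * a)))
                   = wact (cm_transpose B) (alt_word s' s (braid_order (b * a)))"
  proof (rule wact_braid[OF assms(2)])
    show "cm_transpose B s s = 2" "cm_transpose B s' s' = 2"
      using gcm_diag[OF gcm_transpose[OF assms(1)]] by blast+
    show "cm_transpose B s s' = - b" "cm_transpose B s' s = - a"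
      using assms(3,4) by (simp_all add: cm_transpose_def)
    show "(b, a) \<in> finite_dihedral"
      using assms(5) by (auto simp: finite_dihedral_def)
  qed
  ultimately show ?thesis by (simp add: word_equiv_def mult.commute[of b a])
qed

text \<open>The word \<open>m\<close> is reduced in the group generated by \<open>r\<^sub>s, r\<^sub>s'\<close>, and \<open>s\<close> is not a right
  descent of the element it represents.\<close>

definition rank2_reduced :: "('i::finite \<Rightarrow> 'i \<Rightarrow> int) \<Rightarrow> 'i \<Rightarrow> 'i \<Rightarrow> 'i list \<Rightarrow> bool" where
  "rank2_reduced B s s' m \<longleftrightarrow> set m \<subseteq> {s, s'} \<and>
     (\<forall>u. set u \<subseteq> {s, s'} \<longrightarrow> word_equiv B u m \<longrightarrow>
        length m \<le> length u \<and> (length u = length m \<longrightarrow> u = [] \<or> last u \<noteq> s))"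

lemma rank2_reduced_eq_alt_word:
  assumes "gcm B" "s \<noteq> s'" "rank2_reduced B s s' m"
  shows "m = alt_word s s' (length m)"
proof (rule successively_neq_eq_alt_word[OF assms(2)])
  show m: "set m \<subseteq> {s, s'}" using assms(3) by (simp add: rank2_reduced_def)
  show "m = [] \<or> last m \<noteq> s" using assms(3) by (simp add: rank2_reduced_def)
  show "successively (\<noteq>) m"
  proof (rule ccontr)
    assume "\<not> successively (\<noteq>) m"
    then obtain x c y where xcy: "m = x @ [c, c] @ y" using not_successively_neq by blast
    then have "word_equiv B (x @ y) m"
      using word_equiv_sym[OF word_equiv_cancel[OF assms(1)]] by simp
    moreover have "set (x @ y) \<subseteq> {s, s'}" using m xcy by auto
    ultimately have "length m \<le> length (x @ y)"
      using assms(3) unfolding rank2_reduced_def by blast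
    then show False using xcy by simp
  qed
qed

lemma rank2_reduced_length_less:
  assumes "gcm B" "s \<noteq> s'" "B s s' = - a" "B s' s = - b"
    and "(a, b) \<in> finite_dihedral"
    and red: "rank2_reduced B s s' (alt_word s s' L)"
  shows "L < braid_order (a * b)"
proof (rule ccontr)
  define M where "M = braid_order (a * b)"
  assume "\<not> L < braid_order (a * b)"
  then have "L = (L - M) + M" by (simp add: M_def)
  then obtain P where P: "alt_word s s' L = P @ alt_word s s' M" "set P \<subseteq> {s, s'}"
    using alt_word_prefix[of s s' "L - M" M] by metis
  define u where "u = P @ alt_word s' s M"
  have "M \<noteq> 0" by (simp add: M_def braid_order_def)
  then obtain k where "M = Suc k" using not0_implies_Suc by blast
  then have "alt_word s' s M = alt_word s s' k @ [s]" by (simp only: alt_word_Suc)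
  then have u_snoc: "u = (P @ alt_word s s' k) @ [s]" by (simp add: u_def)
  have "word_equiv B u (alt_word s s' L)"
    using P(1) word_equiv_append[OF word_equiv_refl word_equiv_sym[OF word_equiv_braid[OF assms(1-5)]]]
    by (simp add: u_def M_def)
  moreover have "set u \<subseteq> {s, s'}"
    using P(2) alt_word_set[of s' s M] by (auto simp: u_def)
  moreover have "length u = length (alt_word s s' L)"
    using P(1) by (simp add: u_def)
  ultimately have "u = [] \<or> last u \<noteq> s"
    using red unfolding rank2_reduced_def by blast
  then show False using u_snoc by simp
qed

lemma wact_rank2_reduced_nonneg:
  assumes "gcm B" "s \<noteq> s'" "rank2_reduced B s s' m"
  shows "\<exists>p q. 0 \<le> p \<and> 0 \<le> q \<and> wact B m (simple s) = (\<lambda>j. p * simple s j + q * simple s' j)"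
proof -
  define a b L where "a = - B s s'" and "b = - B s' s" and "L = length m"
  have m: "m = alt_word s s' L"
    unfolding L_def by (rule rank2_reduced_eq_alt_word[OF assms])
  have "0 \<le> fst (dihedral_coeffs a b L) \<and> 0 \<le> snd (dihedral_coeffs a b L)"
  proof (cases "4 \<le> a * b")
    case True
    moreover have "0 \<le> a" "0 \<le> b"
      using assms(1,2) by (auto simp: gcm_def a_def b_def)
    ultimately show ?thesis using dihedral_coeffs_nonneg_infinite by blast
  next
    case False
    then have fin: "(a, b) \<in> finite_dihedral"
      using gcm_rank2_finite_cases[OF assms(1,2)] by (simp add: a_def b_def)
    have "L < braid_order (a * b)"
      using rank2_reduced_length_less[OF assms(1,2) _ _ fin] assms(3) m by (simp add: a_def b_def)
    then show ?thesis using dihedral_coeffs_nonneg_finite[OF fin] by blast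
  qed
  moreover have "wact B m (simple s)
      = (\<lambda>j. fst (dihedral_coeffs a b L) * simple s j + snd (dihedral_coeffs a b L) * simple s' j)"
    unfolding m a_def b_def using assms(1) by (intro wact_alt_word_simple[OF assms(2)]) (simp_all add: gcm_diag)
  ultimately show ?thesis by blast
qed

lemma wact_rank2_simple_nonneg:
  assumes "gcm B" "s \<noteq> s'" "set v \<subseteq> {s, s'}"
    and "word_length_in B {s, s'} v \<le> word_length_in B {s, s'} (v @ [s])"
  shows "\<exists>p q. 0 \<le> p \<and> 0 \<le> q \<and> wact B v (simple s) = (\<lambda>j. p * simple s j + q * simple s' j)"
proof -
  obtain m where m: "set m \<subseteq> {s, s'}" "length m = word_length_in B {s, s'} v" "word_equiv B m v"
    using word_length_in_witness[OF assms(3)] by blast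
  have "rank2_reduced B s s' m"
    unfolding rank2_reduced_def
  proof (intro conjI allI impI)
    fix u assume u: "set u \<subseteq> {s, s'}" "word_equiv B u m"
    then have uv: "word_equiv B u v" using m(3) word_equiv_trans by blast
    then show "length m \<le> length u" using word_length_in_minimal[OF u(1) uv] m(2) by simp
    assume len: "length u = length m"
    show "u = [] \<or> last u \<noteq> s"
    proof (rule ccontr)
      assume "\<not> (u = [] \<or> last u \<noteq> s)"
      then obtain u' where us: "u = u' @ [s]" by (metis append_butlast_last_id)
      have "set u' \<subseteq> {s, s'}" using u(1) us by simp
      moreover have "word_equiv B u' (v @ [s])"
        using word_equiv_snoc_cancel[OF assms(1)] uv us by simp
      ultimately have "word_length_in B {s, s'} (v @ [s]) \<le> length u'"
        by (rule word_length_in_minimal)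
      then show False using assms(4) len m(2) us by simp
    qed
  qed (use m(1) in simp)
  then have "\<exists>p q. 0 \<le> p \<and> 0 \<le> q \<and> wact B m (simple s) = (\<lambda>j. p * simple s j + q * simple s' j)"
    by (rule wact_rank2_reduced_nonneg[OF assms(1,2)])
  moreover have "wact B m = wact B v" using m(3) by (simp add: word_equiv_def)
  ultimately show ?thesis by simp
qed

section \<open>Tits' positivity theorem\<close>

lemma word_length_snoc_less:
  assumes "gcm B" "word_equiv B (r @ [s]) ws" "length r + 1 = word_length B ws"
  shows "word_length B (ws @ [s]) < word_length B ws"
proof -
  have "word_equiv B r (ws @ [s])" by (rule word_equiv_snoc_cancel[OF assms(1,2)])
  then have "word_length B (ws @ [s]) \<le> length r" by (rule word_length_minimal)
  then show ?thesis using assms(3) by simp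
qed

text \<open>The factorization \<open>w = v u\<close> with \<open>u\<close> in the parabolic subgroup \<open>W\<^sub>I\<close> and \<open>v\<close> without right
  descents in \<open>I\<close>, obtained by minimizing \<open>\<ell>(v)\<close> among length-additive factorizations.\<close>

lemma parabolic_factorization:
  assumes "gcm B" "set u0 \<subseteq> I" "word_equiv B (v0 @ u0) ws"
    and "word_length B v0 + word_length_in B I u0 \<le> word_length B ws"
  shows "\<exists>v u. set u \<subseteq> I \<and> word_equiv B (v @ u) ws
           \<and> word_length B v + word_length_in B I u \<le> word_length B ws
           \<and> word_length B v \<le> word_length B v0
           \<and> (\<forall>t\<in>I. word_length B v \<le> word_length B (v @ [t]))"
proof -
  define Q where "Q = (\<lambda>(v, u). set u \<subseteq> I \<and> word_equiv B (v @ u) ws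
                                  \<and> word_length B v + word_length_in B I u \<le> word_length B ws)"
  have "Q (v0, u0)" using assms(2-) by (simp add: Q_def)
  then obtain z where "Q z" and z_min: "\<forall>y. Q y \<longrightarrow> word_length B (fst z) \<le> word_length B (fst y)"
    using ex_has_least_nat[of Q "(v0, u0)" "\<lambda>z. word_length B (fst z)"] by blast
  define v u where "v = fst z" and "u = snd z"
  have Qvu: "Q (v, u)" using \<open>Q z\<close> by (simp add: v_def u_def)
  have min: "\<And>y. Q y \<Longrightarrow> word_length B v \<le> word_length B (fst y)"
    using z_min v_def by blast
  have "word_length B v \<le> word_length B (v @ [t])" if t: "t \<in> I" for t
  proof (rule ccontr)
    assume less: "\<not> word_length B v \<le> word_length B (v @ [t])"
    have "word_equiv B (v @ [t, t] @ u) ws"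
      using word_equiv_trans[OF word_equiv_cancel[OF assms(1)]] Qvu by (simp add: Q_def)
    then have "word_equiv B ((v @ [t]) @ (t # u)) ws" by simp
    moreover have "word_length_in B I (t # u) \<le> word_length_in B I u + 1"
      using word_length_in_Cons[of u I t B] t Qvu by (simp add: Q_def)
    ultimately have "Q (v @ [t], t # u)" using less t Qvu by (simp add: Q_def)
    then show False using min[of "(v @ [t], t # u)"] less by simp
  qed
  then show ?thesis using Qvu min[OF \<open>Q (v0, u0)\<close>] by (auto simp: Q_def)
qed

lemma parabolic_factor_length_snoc:
  assumes "word_equiv B (v @ u) ws" "set u \<subseteq> I" "s \<in> I"
    and "word_length B v + word_length_in B I u \<le> word_length B ws"
    and "word_length B ws \<le> word_length B (ws @ [s])"
  shows "word_length_in B I u \<le> word_length_in B I (u @ [s])"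
proof -
  have "word_equiv B (v @ (u @ [s])) (ws @ [s])"
    using word_equiv_append[OF assms(1) word_equiv_refl[of B "[s]"]] by simp
  then have "word_length B (ws @ [s]) = word_length B (v @ (u @ [s]))"
    by (simp add: word_length_equiv)
  also have "\<dots> \<le> word_length B v + word_length B (u @ [s])"
    by (rule word_length_append)
  also have "word_length B (u @ [s]) \<le> word_length_in B I (u @ [s])"
    using word_length_le_word_length_in[of "u @ [s]" I B] assms(2,3) by simp
  finally show ?thesis using assms(4,5) by simp
qed

text \<open>The core of Tits' theorem, by induction on \<open>\<ell>(w)\<close>: with \<open>s'\<close> the last letter of a reduced
  word for \<open>w\<close>, write \<open>w = v u\<close> with \<open>u \<in> \<langle>r\<^sub>s, r\<^sub>s\<^sub>'\<rangle>\<close> and \<open>v\<close> shorter without descents in \<open>{s, s'}\<close>;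
  then \<open>u \<alpha>\<^sub>s \<in> \<nat> \<alpha>\<^sub>s + \<nat> \<alpha>\<^sub>s\<^sub>'\<close> by the rank-two analysis and \<open>v\<close> keeps both simple roots nonnegative.\<close>

lemma wact_simple_nonneg:
  assumes "gcm B" "word_length B ws \<le> word_length B (ws @ [s])"
  shows "\<forall>j. 0 \<le> wact B ws (simple s) j"
  using assms(2)
proof (induction "word_length B ws" arbitrary: ws s rule: less_induct)
  case less
  obtain r where r: "length r = word_length B ws" "word_equiv B r ws"
    using word_length_witness by blast
  show ?case
  proof (cases "r = []")
    case True
    then have "wact B ws = id" using r(2) by (simp add: word_equiv_def)
    then show ?thesis by (simp add: simple_def)
  next
    case False
    then obtain r0 s' where r0: "r = r0 @ [s']" by (metis rev_exhaust)
    have r0_equiv: "word_equiv B (r0 @ [s']) ws" and r0_len: "length r0 + 1 = word_length B ws"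
      using r r0 by simp_all
    have ss: "s \<noteq> s'"
      using word_length_snoc_less[OF assms(1) r0_equiv r0_len] less.prems by auto
    define I where "I = {s, s'}"
    have "word_length B r0 + word_length_in B I [s'] \<le> word_length B ws"
      using word_length_le[of B r0] word_length_in_le[of "[s']" I B] r0_len I_def by simp
    moreover have "set [s'] \<subseteq> I" by (simp add: I_def)
    ultimately obtain v u where u: "set u \<subseteq> I" and vu: "word_equiv B (v @ u) ws"
      and len: "word_length B v + word_length_in B I u \<le> word_length B ws"
      "word_length B v \<le> word_length B r0"
      and desc: "\<forall>t\<in>I. word_length B v \<le> word_length B (v @ [t])"
      using parabolic_factorization[OF assms(1) _ r0_equiv] by blast
    have "word_length B v < word_length B ws"
      using len(2) word_length_le[of B r0] r0_len by simp
    then have v_nonneg: "\<forall>j. 0 \<le> wact B v (simple t) j" if "t \<in> I" for t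
      using less.hyps desc that by blast
    have "word_length_in B I u \<le> word_length_in B I (u @ [s])"
      using parabolic_factor_length_snoc[OF vu u _ len(1) less.prems] I_def by simp
    then obtain p q where pq: "0 \<le> p" "0 \<le> q"
      "wact B u (simple s) = (\<lambda>j. p * simple s j + q * simple s' j)"
      using wact_rank2_simple_nonneg[OF assms(1) ss] u I_def by blast
    have "wact B ws (simple s) = wact B v (wact B u (simple s))"
      using vu unfolding word_equiv_def wact_append by (metis comp_apply)
    also have "\<dots> = (\<lambda>j. p * wact B v (simple s) j + q * wact B v (simple s') j)"
      unfolding pq(3) by (rule wact_linear)
    finally show ?thesis using pq v_nonneg I_def by simp
  qed
qed

lemma wact_snoc_simple:
  assumes "gcm B"
  shows "wact B (ws @ [i]) (simple i) = (\<lambda>j. - wact B ws (simple i) j)"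
  using assms by (simp add: wact_append refl_simple_self gcm_diag wact_uminus)

lemma wact_simple_sign:
  assumes "gcm B"
  shows "(\<forall>j. 0 \<le> wact B ws (simple i) j) \<or> (\<forall>j. wact B ws (simple i) j \<le> 0)"
proof (cases "word_length B ws \<le> word_length B (ws @ [i])")
  case True
  then show ?thesis using wact_simple_nonneg[OF assms] by blast
next
  case False
  have "word_equiv B ((ws @ [i]) @ [i]) ws"
    using word_equiv_cancel[OF assms, of ws i "[]"] by simp
  then have "word_length B ((ws @ [i]) @ [i]) = word_length B ws" by (rule word_length_equiv)
  then have "\<forall>j. 0 \<le> wact B (ws @ [i]) (simple i) j"
    using wact_simple_nonneg[OF assms, of "ws @ [i]" i] False by simp
  then show ?thesis using wact_snoc_simple[OF assms] by auto
qed

lemma wact_inj: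
  assumes "gcm B" "wact B w x = wact B w y"
  shows "x = y"
  using wact_rev_wact[of B w x] wact_rev_wact[of B w y] assms gcm_diag by metis

lemma wact_simple_nonzero:
  assumes "gcm B"
  shows "wact B w (simple i) \<noteq> (\<lambda>j. 0)"
proof
  assume "wact B w (simple i) = (\<lambda>j. 0)"
  then have "wact B w (simple i) = wact B w (\<lambda>j. 0 * simple i j)"
    using wact_scale[of B w 0 "simple i"] by simp
  then have "simple i = (\<lambda>j. 0 * simple i j)" by (rule wact_inj[OF assms])
  then have "simple i i = 0" by (simp add: fun_eq_iff)
  then show False by (simp add: simple_def)
qed

lemma word_equiv_Nil_if_nonneg:
  assumes "gcm B" "\<And>k j. 0 \<le> wact B u (simple k) j"
  shows "word_equiv B u []"
proof (rule ccontr)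
  assume ne: "\<not> word_equiv B u []"
  obtain r where r: "length r = word_length B u" "word_equiv B r u"
    using word_length_witness by blast
  have "r \<noteq> []" using r(2) ne by (metis word_equiv_sym)
  then obtain r0 k where r0: "r = r0 @ [k]" by (metis rev_exhaust)
  have "word_length B (r0 @ [k]) = word_length B u"
    using word_length_equiv[OF r(2)] r0 by simp
  then have "word_length B r0 \<le> word_length B (r0 @ [k])"
    using word_length_le[of B r0] r(1) r0 by simp
  then have nonneg: "\<forall>j. 0 \<le> wact B r0 (simple k) j"
    using wact_simple_nonneg[OF assms(1)] by blast
  have "wact B u (simple k) = wact B (r0 @ [k]) (simple k)"
    using r(2) r0 by (simp add: word_equiv_def)
  also have "\<dots> = (\<lambda>j. - wact B r0 (simple k) j)" by (rule wact_snoc_simple[OF assms(1)])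
  finally have "wact B u (simple k) = (\<lambda>j. - wact B r0 (simple k) j)" .
  then have "wact B r0 (simple k) = (\<lambda>j. 0)"
    using assms(2)[of k] nonneg by (auto simp: fun_eq_iff intro: antisym)
  then show False using wact_simple_nonzero[OF assms(1)] by blast
qed

section \<open>Coroots and root reflections\<close>

lemma wact_conjugate_reflection:
  assumes "gcm B"
  shows "wact B (u @ [i] @ rev u) x
           = (\<lambda>j. x j - pair B (wact (cm_transpose B) u (simple i)) x * wact B u (simple i) j)"
proof -
  have d: "\<forall>i. B i i = 2" using assms gcm_diag by blast
  define z where "z = wact B (rev u) x"
  have P: "pair B (simple i) z = pair B (wact (cm_transpose B) u (simple i)) x"
    using pair_wact_transpose_wact[of B u "simple i" z, OF d] wact_wact_rev[of B u x, OF d] z_def by simp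
  have "wact B (u @ [i] @ rev u) x = wact B u (refl B i z)"
    by (simp add: wact_append z_def)
  also have "refl B i z = (\<lambda>j. 1 * z j + (- pair B (simple i) z) * simple i j)"
    by (simp add: refl_apply)
  also have "wact B u \<dots> = (\<lambda>j. 1 * wact B u z j + (- pair B (simple i) z) * wact B u (simple i) j)"
    by (rule wact_linear)
  also have "wact B u z = x" using wact_wact_rev[of B u x, OF d] z_def by simp
  finally show ?thesis using P by simp
qed

text \<open>If \<open>w \<alpha>\<^sub>i = \<alpha>\<^sub>j\<close>, then \<open>r\<^sub>j w r\<^sub>i w\<^sup>-\<^sup>1\<close> sends every simple root to a nonnegative vector,
  so it is trivial by faithfulness; evaluated on \<open>\<alpha>\<^sub>j\<^sup>\<or>\<close> this forces \<open>w \<alpha>\<^sub>i\<^sup>\<or> = \<alpha>\<^sub>j\<^sup>\<or>\<close>.\<close>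

lemma wact_transpose_simple:
  assumes g: "gcm B" and u: "wact B u (simple i) = simple j"
  shows "wact (cm_transpose B) u (simple i) = simple j"
proof -
  have d: "\<forall>i. B i i = 2" using g gcm_diag by blast
  have dt: "\<forall>i. cm_transpose B i i = 2" using d by (simp add: cm_transpose_def)
  define c where "c = wact (cm_transpose B) u (simple i)"
  have pc: "pair B c (simple j) = 2"
    using pair_wact_transpose_wact[of B u "simple i" "simple i", OF d] u c_def
    by (simp add: pair_simple_simple d)
  define v where "v = [j] @ (u @ [i] @ rev u)"
  have wv: "wact B v x = refl B j (\<lambda>l. x l - pair B c x * simple j l)" for x
    using wact_conjugate_reflection[OF g, of u i x] u c_def by (simp add: v_def)
  have wvk: "wact B v (simple k) = (\<lambda>l. simple k l + (pair B c (simple k) - B j k) * simple j l)" for k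
  proof -
    have p: "pair B (simple j) (\<lambda>l. simple k l - pair B c (simple k) * simple j l)
               = B j k - pair B c (simple k) * 2"
      by (simp add: pair_diff_right pair_simple_simple d)
    show ?thesis
      by (simp only: wv refl_apply p) (simp add: fun_eq_iff algebra_simps)
  qed
  have "0 \<le> wact B v (simple k) l" for k l
  proof (cases "k = j")
    case True
    then show ?thesis unfolding wvk using pc d by (simp add: simple_def)
  next
    case False
    then have "wact B v (simple k) k = 1" unfolding wvk by (simp add: simple_def)
    then show ?thesis using wact_simple_sign[OF g, of v k] by (metis not_one_le_zero)
  qed
  then have "word_equiv B v []" by (rule word_equiv_Nil_if_nonneg[OF g])
  then have "wact (cm_transpose B) v (simple j) = simple j" by (simp add: word_equiv_def)
  moreover have "pair (cm_transpose B) (wact B u (simple i)) (simple j) = 2"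
    using u by (simp add: pair_simple_simple cm_transpose_def d)
  then have "wact (cm_transpose B) v (simple j) = refl (cm_transpose B) j (\<lambda>l. simple j l - 2 * c l)"
    using wact_conjugate_reflection[OF gcm_transpose[OF g], of u i "simple j"] by (simp add: v_def c_def)
  moreover have "pair (cm_transpose B) (simple j) (\<lambda>l. simple j l - 2 * c l) = - 2"
    by (simp add: pair_diff_right pair_simple_simple pair_transpose pc dt)
  then have "refl (cm_transpose B) j (\<lambda>l. simple j l - 2 * c l) = (\<lambda>l. 3 * simple j l - 2 * c l)"
    by (simp add: refl_apply fun_eq_iff algebra_simps)
  ultimately show ?thesis unfolding c_def[symmetric] by (auto simp: fun_eq_iff)
qed

lemma coroot_wact:
  assumes g: "gcm A" and b: "\<beta> = wact A ws (simple i)"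
  shows "coroot A \<beta> = cwact A ws (simple i)"
  unfolding coroot_def
proof (rule the_equality)
  show "\<exists>ws' i'. \<beta> = wact A ws' (simple i') \<and> cwact A ws (simple i) = cwact A ws' (simple i')"
    using b by blast
next
  fix c
  assume "\<exists>ws' i'. \<beta> = wact A ws' (simple i') \<and> c = cwact A ws' (simple i')"
  then obtain ws' i' where w': "\<beta> = wact A ws' (simple i')" "c = cwact A ws' (simple i')"
    by blast
  have d: "\<forall>i. A i i = 2" using g gcm_diag by blast
  have dt: "\<forall>i. cm_transpose A i i = 2" using d by (simp add: cm_transpose_def)
  have "wact A (rev ws' @ ws) (simple i) = simple i'"
    using b w'(1) wact_rev_wact[of A ws' "simple i'", OF d] by (simp add: wact_append)
  then have "wact (cm_transpose A) (rev ws' @ ws) (simple i) = simple i'"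
    by (rule wact_transpose_simple[OF g])
  then have "wact (cm_transpose A) ws' (wact (cm_transpose A) (rev ws') (wact (cm_transpose A) ws (simple i)))
               = wact (cm_transpose A) ws' (simple i')"
    by (simp add: wact_append)
  then show "c = cwact A ws (simple i)"
    using w'(2) wact_wact_rev[of "cm_transpose A" ws' "wact (cm_transpose A) ws (simple i)", OF dt]
    by (simp add: cwact_eq_wact_transpose)
qed

lemma srefl_eq:
  assumes g: "gcm A" and b: "\<beta> = wact A ws (simple i)"
  shows "srefl A \<beta> = (\<lambda>x j. x j - pair A (coroot A \<beta>) x * \<beta> j)"
proof -
  have key: "wact A ws' \<circ> refl A i' \<circ> wact A (rev ws') = (\<lambda>x j. x j - pair A (coroot A \<beta>) x * \<beta> j)"
    if "\<beta> = wact A ws' (simple i')" for ws' i'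
  proof
    fix x
    have "(wact A ws' \<circ> refl A i' \<circ> wact A (rev ws')) x = wact A (ws' @ [i'] @ rev ws') x"
      by (simp add: wact_append)
    also have "\<dots> = (\<lambda>j. x j - pair A (wact (cm_transpose A) ws' (simple i')) x * wact A ws' (simple i') j)"
      by (rule wact_conjugate_reflection[OF g])
    finally show "(wact A ws' \<circ> refl A i' \<circ> wact A (rev ws')) x
                    = (\<lambda>j. x j - pair A (coroot A \<beta>) x * \<beta> j)"
      using coroot_wact[OF g that] that by (simp add: cwact_eq_wact_transpose)
  qed
  show ?thesis
    unfolding srefl_def
  proof (rule the_equality)
    show "\<exists>ws' i'. \<beta> = wact A ws' (simple i')
            \<and> (\<lambda>x j. x j - pair A (coroot A \<beta>) x * \<beta> j) = wact A ws' \<circ> refl A i' \<circ> wact A (rev ws')"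
      using b key[OF b] by metis
  next
    fix f
    assume "\<exists>ws' i'. \<beta> = wact A ws' (simple i') \<and> f = wact A ws' \<circ> refl A i' \<circ> wact A (rev ws')"
    then show "f = (\<lambda>x j. x j - pair A (coroot A \<beta>) x * \<beta> j)" using key by blast
  qed
qed

lemma roots_iff: "\<beta> \<in> roots A \<longleftrightarrow> (\<exists>ws i. \<beta> = wact A ws (simple i))"
  by (auto simp: roots_def)

lemma pos_roots_iff: "\<beta> \<in> pos_roots A \<longleftrightarrow> \<beta> \<in> roots A \<and> (\<forall>j. 0 \<le> \<beta> j)"
  by (simp add: pos_roots_def)

lemma simple_in_roots: "simple i \<in> roots A"
  using roots_iff[of "simple i" A] by (metis id_apply wact_Nil)

lemma simple_in_pos_roots: "simple i \<in> pos_roots A"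
  using simple_in_roots by (auto simp: pos_roots_iff simple_def)

lemma refl_roots: "\<beta> \<in> roots A \<Longrightarrow> refl A k \<beta> \<in> roots A"
  unfolding roots_iff by (metis comp_apply wact_Cons)

lemma roots_uminus:
  assumes "gcm A" "\<beta> \<in> roots A"
  shows "(\<lambda>j. - \<beta> j) \<in> roots A"
proof -
  obtain ws i where "\<beta> = wact A ws (simple i)" using assms(2) roots_iff by blast
  then have "wact A (ws @ [i]) (simple i) = (\<lambda>j. - \<beta> j)"
    using wact_snoc_simple[OF assms(1)] by simp
  then show ?thesis using roots_iff by metis
qed

lemma neg_roots_iff:
  assumes g: "gcm A"
  shows "x \<in> neg_roots A \<longleftrightarrow> x \<in> roots A \<and> (\<forall>j. x j \<le> 0)"
proof
  assume "x \<in> neg_roots A"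
  then obtain y where y: "y \<in> pos_roots A" "x = (\<lambda>j. - y j)"
    by (auto simp: neg_roots_def fun_Compl_def)
  then show "x \<in> roots A \<and> (\<forall>j. x j \<le> 0)"
    using roots_uminus[OF g, of y] by (auto simp: pos_roots_iff)
next
  assume x: "x \<in> roots A \<and> (\<forall>j. x j \<le> 0)"
  then have "(\<lambda>j. - x j) \<in> pos_roots A"
    using roots_uminus[OF g, of x] by (auto simp: pos_roots_iff)
  moreover have "x = - (\<lambda>j. - x j)" by (simp add: fun_Compl_def)
  ultimately show "x \<in> neg_roots A" unfolding neg_roots_def by blast
qed

lemma root_sign:
  assumes "gcm A" "\<beta> \<in> roots A"
  shows "(\<forall>j. 0 \<le> \<beta> j) \<or> (\<forall>j. \<beta> j \<le> 0)"
  using assms wact_simple_sign roots_iff by metis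

lemma root_pos_or_neg:
  assumes "gcm A" "\<beta> \<in> roots A"
  shows "\<beta> \<in> pos_roots A \<or> \<beta> \<in> neg_roots A"
  using root_sign[OF assms] assms by (auto simp: neg_roots_iff pos_roots_iff)

lemma pos_root_not_neg:
  assumes g: "gcm A" and "\<beta> \<in> pos_roots A"
  shows "\<beta> \<notin> neg_roots A"
proof
  assume "\<beta> \<in> neg_roots A"
  then have "\<beta> = (\<lambda>j. 0)"
    using assms by (auto simp: neg_roots_iff[OF g] pos_roots_iff intro: antisym)
  moreover obtain ws i where "\<beta> = wact A ws (simple i)"
    using assms(2) roots_iff pos_roots_iff by blast
  ultimately show False using wact_simple_nonzero[OF g] by metis
qed

lemma root_multiple_simple:
  assumes g: "gcm A" and "\<beta> \<in> roots A" "\<beta> = (\<lambda>j. m * simple i j)"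
  shows "m = 1 \<or> m = -1"
proof -
  have d: "\<forall>i. A i i = 2" using g gcm_diag by blast
  obtain ws k where w: "\<beta> = wact A ws (simple k)" using assms(2) roots_iff by blast
  have "simple k = wact A (rev ws) \<beta>" using wact_rev_wact[of A ws "simple k", OF d] w by simp
  also have "\<dots> = (\<lambda>j. m * wact A (rev ws) (simple i) j)" using assms(3) wact_scale by simp
  finally have "m * wact A (rev ws) (simple i) k = 1" by (metis simple_def)
  then show ?thesis by (simp add: zmult_eq_1_iff) (metis)
qed

lemma pos_root_other_coord:
  assumes g: "gcm A" and b: "\<beta> \<in> pos_roots A" and ne: "\<beta> \<noteq> simple i"
  shows "\<exists>j. j \<noteq> i \<and> 0 < \<beta> j"
proof (rule ccontr)
  assume "\<not> (\<exists>j. j \<noteq> i \<and> 0 < \<beta> j)"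
  then have "\<forall>j. j \<noteq> i \<longrightarrow> \<beta> j = 0" using b by (auto simp: pos_roots_iff) (meson antisym not_le)
  then have e: "\<beta> = (\<lambda>j. \<beta> i * simple i j)" by (auto simp: fun_eq_iff simple_def)
  then have "\<beta> i = 1 \<or> \<beta> i = -1" using root_multiple_simple[OF g _ e] b by (simp add: pos_roots_iff)
  moreover have "0 \<le> \<beta> i" using b by (simp add: pos_roots_iff)
  ultimately have "\<beta> i = 1" by linarith
  then show False using e ne by simp
qed

lemma refl_pos_roots:
  assumes g: "gcm A" and b: "\<beta> \<in> pos_roots A" and ne: "\<beta> \<noteq> simple i"
  shows "refl A i \<beta> \<in> pos_roots A"
proof -
  obtain j where j: "j \<noteq> i" "0 < \<beta> j" using pos_root_other_coord[OF g b ne] by blast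
  have r: "refl A i \<beta> \<in> roots A" using refl_roots b by (auto simp: pos_roots_iff)
  have "0 < refl A i \<beta> j" using j refl_other by metis
  then show ?thesis using root_sign[OF g r] r by (auto simp: pos_roots_iff not_le[symmetric])
qed

lemma coroot_simple: "gcm A \<Longrightarrow> coroot A (simple i) = simple i"
  using coroot_wact[of A "simple i" "[]" i] by (simp add: cwact_def)

lemma coroot_refl:
  assumes g: "gcm A" and b: "\<beta> \<in> roots A"
  shows "coroot A (refl A k \<beta>) = crefl A k (coroot A \<beta>)"
proof -
  obtain ws i where w: "\<beta> = wact A ws (simple i)" using b roots_iff by blast
  then have "coroot A (refl A k \<beta>) = cwact A (k # ws) (simple i)"
    by (intro coroot_wact[OF g]) simp
  also have "\<dots> = crefl A k (cwact A ws (simple i))" by (simp add: cwact_def)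
  finally show ?thesis using coroot_wact[OF g w] by simp
qed

lemma pair_coroot_refl:
  assumes "gcm A" "\<beta> \<in> roots A"
  shows "pair A (coroot A (refl A i \<beta>)) x = pair A (coroot A \<beta>) (refl A i x)"
  using coroot_refl[OF assms] pair_crefl[of A i] gcm_diag[OF assms(1)] by simp

lemma pair_coroot_refl_simple:
  assumes "gcm A" "\<beta> \<in> roots A"
  shows "pair A (coroot A (refl A i \<beta>)) (simple i) = - pair A (coroot A \<beta>) (simple i)"
  using pair_coroot_refl[OF assms] refl_simple_self[of A i] gcm_diag[OF assms(1)] pair_uminus_right
  by simp

lemma pair_coroot_self:
  assumes g: "gcm A" and b: "\<beta> \<in> roots A"
  shows "pair A (coroot A \<beta>) \<beta> = 2"
proof -
  have d: "\<forall>i. A i i = 2" using g gcm_diag by blast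
  obtain ws i where w: "\<beta> = wact A ws (simple i)" using b roots_iff by blast
  show ?thesis
    using coroot_wact[OF g w] w pair_wact_transpose_wact[of A ws "simple i" "simple i", OF d]
    by (simp add: cwact_eq_wact_transpose pair_simple_simple d)
qed

lemma srefl_apply:
  assumes "gcm A" "\<beta> \<in> roots A"
  shows "srefl A \<beta> x = (\<lambda>j. x j - pair A (coroot A \<beta>) x * \<beta> j)"
proof -
  obtain ws i where "\<beta> = wact A ws (simple i)" using assms(2) roots_iff by blast
  then show ?thesis using srefl_eq[OF assms(1)] by simp
qed

lemma srefl_root:
  assumes g: "gcm A" and "\<beta> \<in> roots A" "\<gamma> \<in> roots A"
  shows "srefl A \<beta> \<gamma> \<in> roots A"
proof -
  obtain ws i where w: "\<beta> = wact A ws (simple i)" using assms(2) roots_iff by blast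
  obtain ws' i' where w': "\<gamma> = wact A ws' (simple i')" using assms(3) roots_iff by blast
  have "srefl A \<beta> \<gamma> = wact A (ws @ [i] @ rev ws) \<gamma>"
    using wact_conjugate_reflection[OF g, of ws i \<gamma>] coroot_wact[OF g w] w srefl_eq[OF g w]
    by (simp add: cwact_eq_wact_transpose)
  also have "\<dots> = wact A ((ws @ [i] @ rev ws) @ ws') (simple i')"
    using w' by (simp add: wact_append)
  finally show ?thesis using roots_iff by blast
qed

lemma srefl_refl:
  assumes g: "gcm A" and b: "\<beta> \<in> roots A"
  shows "srefl A (refl A i \<beta>) x = refl A i (srefl A \<beta> (refl A i x))"
proof -
  have "A i i = 2" using g gcm_diag by blast
  then have "refl A i (\<lambda>j. 1 * refl A i x j + (- pair A (coroot A \<beta>) (refl A i x)) * \<beta> j)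
               = (\<lambda>j. 1 * x j + (- pair A (coroot A \<beta>) (refl A i x)) * refl A i \<beta> j)"
    by (simp only: refl_linear refl_refl)
  then show ?thesis
    using srefl_apply[OF g b] srefl_apply[OF g refl_roots[OF b]] pair_coroot_refl[OF g b] by simp
qed

lemma srefl_simple_neg:
  assumes g: "gcm A" and b: "\<beta> \<in> pos_roots A" and ne: "\<beta> \<noteq> simple i"
    and k: "1 \<le> pair A (coroot A \<beta>) (simple i)"
  shows "srefl A \<beta> (simple i) \<in> neg_roots A"
proof -
  have br: "\<beta> \<in> roots A" using b by (simp add: pos_roots_iff)
  obtain j where j: "j \<noteq> i" "0 < \<beta> j" using pos_root_other_coord[OF g b ne] by blast
  have r: "srefl A \<beta> (simple i) \<in> roots A" using srefl_root[OF g br simple_in_roots] .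
  have "srefl A \<beta> (simple i) j < 0"
    using srefl_apply[OF g br] j k by (simp add: simple_def)
  then show ?thesis using root_sign[OF g r] r by (auto simp: neg_roots_iff[OF g] not_le[symmetric])
qed

section \<open>Quantum roots\<close>

lemma quantum_roots_iff:
  "\<beta> \<in> quantum_roots A \<longleftrightarrow> \<beta> \<in> pos_roots A \<and>
     (\<forall>\<gamma>. \<gamma> \<in> pos_roots A \<longrightarrow> srefl A \<beta> \<gamma> \<in> neg_roots A \<longrightarrow> \<gamma> \<noteq> \<beta> \<longrightarrow> pair A (coroot A \<beta>) \<gamma> = 1)"
  by (auto simp: quantum_roots_def Inv_def)

lemma pair_coroot_simple_le1_if_quantum:
  assumes g: "gcm A" and q: "\<beta> \<in> quantum_roots A" and ne: "\<beta> \<noteq> simple i"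
  shows "pair A (coroot A \<beta>) (simple i) \<le> 1"
proof (rule ccontr)
  assume "\<not> pair A (coroot A \<beta>) (simple i) \<le> 1"
  moreover have "\<beta> \<in> pos_roots A" using q quantum_roots_iff by blast
  ultimately have "srefl A \<beta> (simple i) \<in> neg_roots A" using srefl_simple_neg[OF g _ ne] by simp
  then have "pair A (coroot A \<beta>) (simple i) = 1"
    using q quantum_roots_iff simple_in_pos_roots ne by metis
  then show False using \<open>\<not> _ \<le> 1\<close> by simp
qed

lemma pair_coroot_eq_one_if_srefl_eq_simple:
  assumes g: "gcm A" and b: "\<beta> \<in> pos_roots A" "\<beta> \<noteq> simple i"
    and e: "\<epsilon> \<in> pos_roots A" "\<epsilon> \<noteq> simple i"
    and s: "srefl A \<beta> \<epsilon> = simple i" and k: "\<bar>pair A (coroot A \<beta>) (simple i)\<bar> \<le> 1"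
  shows "pair A (coroot A \<beta>) \<epsilon> = 1"
proof -
  define t where "t = pair A (coroot A \<beta>) \<epsilon>"
  have br: "\<beta> \<in> roots A" using b by (simp add: pos_roots_iff)
  have "\<forall>j. \<epsilon> j - t * \<beta> j = simple i j"
    using s srefl_apply[OF g br, of \<epsilon>] by (simp add: t_def fun_eq_iff)
  then have eps: "\<epsilon> = (\<lambda>j. simple i j + t * \<beta> j)"
    by (simp add: fun_eq_iff diff_eq_eq)
  have "pair A (coroot A \<beta>) (simple i) = t - t * 2"
    using srefl_apply[OF g br] s pair_diff_right[of A "coroot A \<beta>" \<epsilon> t \<beta>] pair_coroot_self[OF g br]
    by (simp add: t_def)
  then consider "t = 0" | "t = -1" | "t = 1" using k by linarith
  then show ?thesis
  proof cases
    case 1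
    then show ?thesis using eps e(2) by simp
  next
    case 2
    obtain j where "j \<noteq> i" "0 < \<beta> j" using pos_root_other_coord[OF g b] by blast
    then have "\<epsilon> j < 0" using eps 2 by (simp add: simple_def)
    then show ?thesis using e(1) by (simp add: pos_roots_iff) (metis not_le)
  qed (simp add: t_def)
qed

lemma pair_coroot_eq_one_if_inversion_simple:
  assumes g: "gcm A" and "\<gamma> \<in> pos_roots A" "srefl A \<gamma> (simple i) \<in> neg_roots A"
    and "\<bar>pair A (coroot A \<gamma>) (simple i)\<bar> \<le> 1"
  shows "pair A (coroot A \<gamma>) (simple i) = 1"
proof -
  have "\<gamma> \<in> roots A" using assms(2) by (simp add: pos_roots_iff)
  moreover have "srefl A \<gamma> (simple i) i \<le> 0" using assms(3) neg_roots_iff[OF g] by blast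
  moreover have "simple i i = (1::int)" by (simp add: simple_def)
  ultimately have "1 - pair A (coroot A \<gamma>) (simple i) * \<gamma> i \<le> 0"
    using srefl_apply[OF g] by simp
  moreover have "0 \<le> \<gamma> i" using assms(2) by (simp add: pos_roots_iff)
  ultimately have "0 < pair A (coroot A \<gamma>) (simple i)"
    by (metis mult_nonpos_nonneg not_less diff_le_0_iff_le not_one_le_zero order_trans)
  then show ?thesis using assms(4) by simp
qed

text \<open>Via \<open>s\<^bsub>r\<^sub>i \<beta>\<^esub> = r\<^sub>i s\<^sub>\<beta> r\<^sub>i\<close>, an inversion \<open>\<delta> \<noteq> \<alpha>\<^sub>i\<close> of \<open>s\<^bsub>r\<^sub>i \<beta>\<^esub>\<close> corresponds to \<open>\<epsilon> = r\<^sub>i \<delta>\<close>: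
  either \<open>\<epsilon>\<close> is an inversion of \<open>s\<^sub>\<beta>\<close>, or \<open>s\<^sub>\<beta> \<epsilon>\<close> is the one positive root that \<open>r\<^sub>i\<close> makes
  negative.\<close>

lemma pair_coroot_refl_eq_one_if_inversion:
  assumes g: "gcm A" and q: "\<beta> \<in> quantum_roots A" and ne: "\<beta> \<noteq> simple i"
    and k: "\<bar>pair A (coroot A \<beta>) (simple i)\<bar> \<le> 1"
    and dp: "\<delta> \<in> pos_roots A" "\<delta> \<noteq> simple i" and dn: "srefl A (refl A i \<beta>) \<delta> \<in> neg_roots A"
    and dg: "\<delta> \<noteq> refl A i \<beta>"
  shows "pair A (coroot A (refl A i \<beta>)) \<delta> = 1"
proof -
  define \<epsilon> where "\<epsilon> = refl A i \<delta>"
  have bp: "\<beta> \<in> pos_roots A" using q quantum_roots_iff by blast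
  then have br: "\<beta> \<in> roots A" by (simp add: pos_roots_iff)
  have d: "A i i = 2" using g gcm_diag by blast
  have ep: "\<epsilon> \<in> pos_roots A" using refl_pos_roots[OF g dp] \<epsilon>_def by simp
  have rr: "refl A i \<epsilon> = \<delta>" using refl_refl[of A i, OF d] \<epsilon>_def by simp
  have pair_eq: "pair A (coroot A (refl A i \<beta>)) \<delta> = pair A (coroot A \<beta>) \<epsilon>"
    using pair_coroot_refl[OF g br] \<epsilon>_def by simp
  have s: "srefl A (refl A i \<beta>) \<delta> = refl A i (srefl A \<beta> \<epsilon>)"
    using srefl_refl[OF g br] \<epsilon>_def by simp
  show ?thesis
  proof (cases "srefl A \<beta> \<epsilon> \<in> neg_roots A")
    case True
    moreover have "\<epsilon> \<noteq> \<beta>" using rr dg by auto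
    ultimately show ?thesis using q ep pair_eq quantum_roots_iff by metis
  next
    case False
    then have "srefl A \<beta> \<epsilon> \<in> pos_roots A"
      using root_pos_or_neg[OF g srefl_root[OF g br]] ep by (auto simp: pos_roots_iff)
    then have "srefl A \<beta> \<epsilon> = simple i"
      using refl_pos_roots[OF g] pos_root_not_neg[OF g] dn s by metis
    moreover have "\<epsilon> \<noteq> simple i"
    proof
      assume "\<epsilon> = simple i"
      then have "\<delta> i = -1" using rr refl_simple_self[of A i, OF d] by (auto simp: simple_def)
      moreover have "0 \<le> \<delta> i" using dp by (simp add: pos_roots_iff)
      ultimately show False by simp
    qed
    ultimately show ?thesis
      using pair_coroot_eq_one_if_srefl_eq_simple[OF g bp ne ep] k pair_eq by simp
  qed
qed

lemma refl_quantum_if_pair_abs_le1: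
  assumes g: "gcm A" and q: "\<beta> \<in> quantum_roots A" and ne: "\<beta> \<noteq> simple i"
    and k: "\<bar>pair A (coroot A \<beta>) (simple i)\<bar> \<le> 1"
  shows "refl A i \<beta> \<in> quantum_roots A"
proof -
  have bp: "\<beta> \<in> pos_roots A" using q quantum_roots_iff by blast
  then have br: "\<beta> \<in> roots A" by (simp add: pos_roots_iff)
  have gp: "refl A i \<beta> \<in> pos_roots A" using refl_pos_roots[OF g bp ne] .
  have "pair A (coroot A (refl A i \<beta>)) \<delta> = 1"
    if "\<delta> \<in> pos_roots A" "srefl A (refl A i \<beta>) \<delta> \<in> neg_roots A" "\<delta> \<noteq> refl A i \<beta>" for \<delta>
  proof (cases "\<delta> = simple i")
    case True
    then show ?thesis
      using pair_coroot_eq_one_if_inversion_simple[OF g gp, of i] that(2) k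
        pair_coroot_refl_simple[OF g br, of i]
      by simp
  next
    case False
    then show ?thesis using pair_coroot_refl_eq_one_if_inversion[OF g q ne k] that by blast
  qed
  then show ?thesis using gp quantum_roots_iff by blast
qed

lemma refl_quantum_iff:
  assumes g: "gcm A" and q: "\<beta> \<in> quantum_roots A"
  shows "refl A i \<beta> \<in> quantum_roots A \<longleftrightarrow> \<bar>pair A (coroot A \<beta>) (simple i)\<bar> \<le> 1"
proof (cases "\<beta> = simple i")
  case True
  have "refl A i \<beta> \<notin> pos_roots A"
    using True refl_simple_self[of A i, OF gcm_diag[OF g]] by (auto simp: pos_roots_iff simple_def)
  moreover have "pair A (coroot A \<beta>) (simple i) = 2"
    using True coroot_simple[OF g] gcm_diag[OF g] by (simp add: pair_simple_simple)
  ultimately show ?thesis using quantum_roots_iff by auto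
next
  case ne: False
  have br: "\<beta> \<in> roots A" using q by (simp add: quantum_roots_iff pos_roots_iff)
  have "\<bar>pair A (coroot A \<beta>) (simple i)\<bar> \<le> 1" if rq: "refl A i \<beta> \<in> quantum_roots A"
  proof -
    have "refl A i \<beta> \<noteq> simple i"
    proof
      assume "refl A i \<beta> = simple i"
      then have "\<beta> = (\<lambda>j. - simple i j)"
        using refl_refl[of A i \<beta>, OF gcm_diag[OF g]] refl_simple_self[of A i, OF gcm_diag[OF g]] by simp
      moreover have "0 \<le> \<beta> i" using q by (simp add: quantum_roots_iff pos_roots_iff)
      ultimately show False by (simp add: simple_def)
    qed
    then have "pair A (coroot A (refl A i \<beta>)) (simple i) \<le> 1"
      by (rule pair_coroot_simple_le1_if_quantum[OF g rq])
    moreover note pair_coroot_refl_simple[OF g br]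
    ultimately show ?thesis using pair_coroot_simple_le1_if_quantum[OF g q ne] by simp
  qed
  then show ?thesis using refl_quantum_if_pair_abs_le1[OF g q ne] by blast
qed

lemma quantum_root_descent:
  assumes g: "gcm A" and q: "\<beta> \<in> quantum_roots A" and ns: "\<forall>i. \<beta> \<noteq> simple i"
  shows "\<exists>i. refl A i \<beta> \<in> quantum_roots A \<and> ht (crefl A i (coroot A \<beta>)) = ht (coroot A \<beta>) - 1"
proof -
  have bp: "\<beta> \<in> pos_roots A" using q quantum_roots_iff by blast
  then have br: "\<beta> \<in> roots A" by (simp add: pos_roots_iff)
  have "\<exists>i. 0 < pair A (coroot A \<beta>) (simple i)"
  proof (rule ccontr)
    assume "\<not> (\<exists>i. 0 < pair A (coroot A \<beta>) (simple i))"
    then have "(\<Sum>j\<in>UNIV. \<beta> j * pair A (coroot A \<beta>) (simple j)) \<le> 0"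
      using bp by (intro sum_nonpos) (auto simp: pos_roots_iff mult_nonneg_nonpos not_less)
    then show False using pair_coroot_self[OF g br] pair_expand_right[of A "coroot A \<beta>" \<beta>] by simp
  qed
  then obtain i where "0 < pair A (coroot A \<beta>) (simple i)" by blast
  moreover have "pair A (coroot A \<beta>) (simple i) \<le> 1"
    using pair_coroot_simple_le1_if_quantum[OF g q] ns by blast
  ultimately have k: "pair A (coroot A \<beta>) (simple i) = 1" by simp
  then have "refl A i \<beta> \<in> quantum_roots A" using refl_quantum_iff[OF g q] by simp
  moreover have "ht (crefl A i (coroot A \<beta>)) = ht (coroot A \<beta>) - 1" using ht_crefl[of A i "coroot A \<beta>"] k by simp
  ultimately show ?thesis by blast
qed

theorem proposition2p5:
  fixes A :: "'i::finite \<Rightarrow> 'i \<Rightarrow> int"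
  assumes "gcm A"
  shows "(\<forall>\<beta> \<in> quantum_roots A. (\<forall>i. \<beta> \<noteq> simple i) \<longrightarrow>
            (\<exists>i. refl A i \<beta> \<in> quantum_roots A \<and>
                 ht (crefl A i (coroot A \<beta>)) = ht (coroot A \<beta>) - 1))
       \<and> (\<forall>\<beta> \<in> quantum_roots A. \<forall>i.
            refl A i \<beta> \<in> quantum_roots A \<longleftrightarrow> \<bar>pair A (coroot A \<beta>) (simple i)\<bar> \<le> 1)"
  using quantum_root_descent[OF assms] refl_quantum_iff[OF assms] by blast

end
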